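(* Let $M\ge2$ be an integer and $k\ge2$ real. Suppose $0\le x_1\le\dots\le x_M$ and $\lambda_1,\dots,\lambda_M\ge0$ with $\sum_{i=1}^M\lambda_i=1$. Then $$\sum_{i=1}^M\lambda_ix_i^k-\Big(\sum_{i=1}^M\lambda_ix_i\Big)^k\le\frac18k(k-1)\,x_M^{k-2}(x_M-x_1)^2.$$ *)

theory Defs
  imports "HOL-Analysis.Analysis"
begin

end

theory Submission imports Defs begin

text \<open>Write \<open>a = x\<^sub>1\<close>, \<open>b = x\<^sub>M\<close>, \<open>\<mu> = \<Sum>\<lambda>\<^sub>i x\<^sub>i\<close> and \<open>C = k(k-1) b powr (k-2)\<close>.
  By convexity of \<open>f(t) = t\<^sup>k\<close>, the mean \<open>\<Sum>\<lambda>\<^sub>i f(x\<^sub>i)\<close> lies below the chord of \<open>f\<close> over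
  \<open>[a,b]\<close> evaluated at \<open>\<mu>\<close>. Since \<open>f'' \<le> C\<close> on \<open>[a,b]\<close>, the function \<open>C t\<^sup>2/2 - f(t)\<close> is convex
  too, so the gap between the chord of \<open>f\<close> and \<open>f\<close> is at most \<open>C/2\<close> times the corresponding gap
  for \<open>t\<^sup>2\<close>, which is \<open>(\<mu> - a)(b - \<mu>) \<le> (b - a)\<^sup>2/4\<close>.\<close>

text \<open>Unlike \<open>convex_on_realI\<close>, only derivatives in the open interval are required: \<open>t powr k\<close>
  must be treated on intervals \<open>[0,b]\<close>, and the derivative rules for \<open>powr\<close> need \<open>t > 0\<close>.\<close>

lemma f'_mono_imp_convex_Icc:
  fixes f f' :: "real \<Rightarrow> real"
  assumes cont: "continuous_on {a..b} f"
    and f': "\<And>x. a < x \<Longrightarrow> x < b \<Longrightarrow> (f has_real_derivative f' x) (at x)"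
    and mono: "\<And>x y. a < x \<Longrightarrow> x \<le> y \<Longrightarrow> y < b \<Longrightarrow> f' x \<le> f' y"
  shows "convex_on {a..b} f"
proof (rule convex_on_linorderI)
  fix t x y :: real
  assume t: "0 < t" "t < 1" and xy: "x \<in> {a..b}" "y \<in> {a..b}" "x < y"
  define z where "z = (1 - t) * x + t * y"
  have "x < z" "z < y"
    using t xy(3) mult_strict_left_mono[of x y t] mult_strict_left_mono[of x y "1 - t"]
    by (auto simp: z_def algebra_simps)
  have diff: "f differentiable (at u)" if "x < u" "u < y" for u
  proof -
    have "a < u" "u < b" using that xy by auto
    then show ?thesis using f' real_differentiable_def by blast
  qed
  have cont_sub: "continuous_on {u..v} f" if "x \<le> u" "v \<le> y" for u v
    using continuous_on_subset[OF cont] that xy by auto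
  obtain l1 \<xi> where \<xi>: "x < \<xi>" "\<xi> < z" "(f has_real_derivative l1) (at \<xi>)"
    "f z - f x = (z - x) * l1"
    using MVT[OF \<open>x < z\<close> cont_sub] diff \<open>z < y\<close> by fastforce
  obtain l2 \<eta> where \<eta>: "z < \<eta>" "\<eta> < y" "(f has_real_derivative l2) (at \<eta>)"
    "f y - f z = (y - z) * l2"
    using MVT[OF \<open>z < y\<close> cont_sub] diff \<open>x < z\<close> by fastforce
  have "a < \<xi>" "\<xi> < b" "a < \<eta>" "\<eta> < b"
    using \<xi> \<eta> \<open>x < z\<close> \<open>z < y\<close> xy by auto
  then have "l1 = f' \<xi>" "l2 = f' \<eta>"
    using \<xi>(3) \<eta>(3) f' DERIV_unique by blast+
  then have "l1 \<le> l2"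
    using mono \<xi> \<eta> xy by force
  then have "t * (1 - t) * (y - x) * l1 \<le> t * (1 - t) * (y - x) * l2"
    using t xy by (intro mult_left_mono) auto
  moreover have "z - x = t * (y - x)" "y - z = (1 - t) * (y - x)"
    by (simp_all add: z_def algebra_simps)
  ultimately have "(1 - t) * (f z - f x) \<le> t * (f y - f z)"
    using \<xi>(4) \<eta>(4) by (simp add: mult_ac)
  then show "f ((1 - t) *\<^sub>R x + t *\<^sub>R y) \<le> (1 - t) * f x + t * f y"
    by (simp add: z_def algebra_simps)
qed simp

lemma f''_ge0_imp_convex_Icc:
  fixes f f' f'' :: "real \<Rightarrow> real"
  assumes cont: "continuous_on {a..b} f"
    and f': "\<And>x. a < x \<Longrightarrow> x < b \<Longrightarrow> (f has_real_derivative f' x) (at x)"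
    and f'': "\<And>x. a < x \<Longrightarrow> x < b \<Longrightarrow> (f' has_real_derivative f'' x) (at x)"
    and nonneg: "\<And>x. a < x \<Longrightarrow> x < b \<Longrightarrow> f'' x \<ge> 0"
  shows "convex_on {a..b} f"
proof (rule f'_mono_imp_convex_Icc[OF cont f'])
  fix x y assume xy: "a < x" "x \<le> y" "y < b"
  show "f' x \<le> f' y"
  proof (rule DERIV_nonneg_imp_increasing_open[OF \<open>x \<le> y\<close>])
    show "\<exists>l. (f' has_real_derivative l) (at u) \<and> 0 \<le> l" if "x < u" "u < y" for u
      using f'' nonneg that xy by force
    show "continuous_on {x..y} f'"
    proof (intro continuous_at_imp_continuous_on ballI)
      fix u assume "u \<in> {x..y}"
      then show "isCont f' u"
        using f''[of u] xy by (intro DERIV_isCont) auto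
    qed
  qed
qed

lemma convex_on_powr_Icc:
  fixes a b k :: real
  assumes "0 \<le> a" "1 \<le> k"
  shows "convex_on {a..b} (\<lambda>t. t powr k)"
proof (rule f''_ge0_imp_convex_Icc)
  show "continuous_on {a..b} (\<lambda>t. t powr k)"
    using assms by (intro continuous_on_powr' continuous_intros) auto
  show "((\<lambda>t. t powr k) has_real_derivative k * t powr (k - 1)) (at t)" if "a < t" for t
    using that assms by (auto intro!: derivative_eq_intros)
  show "((\<lambda>t. k * t powr (k - 1)) has_real_derivative k * ((k - 1) * t powr (k - 2))) (at t)"
    if "a < t" for t
    using that assms by (auto intro!: derivative_eq_intros simp: diff_diff_eq)
  show "0 \<le> k * ((k - 1) * t powr (k - 2))" for t
    using assms by simp
qed

lemma convex_on_quadratic_minus_powr_Icc: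
  fixes a b k :: real
  assumes "0 \<le> a" "2 \<le> k"
  shows "convex_on {a..b} (\<lambda>t. k * (k - 1) * b powr (k - 2) / 2 * t\<^sup>2 - t powr k)"
proof (rule f''_ge0_imp_convex_Icc)
  let ?C = "k * (k - 1) * b powr (k - 2)"
  show "continuous_on {a..b} (\<lambda>t. ?C / 2 * t\<^sup>2 - t powr k)"
    using assms by (intro continuous_on_powr' continuous_intros) auto
  show "((\<lambda>t. ?C / 2 * t\<^sup>2 - t powr k) has_real_derivative ?C * t - k * t powr (k - 1)) (at t)"
    if "a < t" for t
    using that assms by (auto intro!: derivative_eq_intros)
  show "((\<lambda>t. ?C * t - k * t powr (k - 1)) has_real_derivative ?C - k * ((k - 1) * t powr (k - 2))) (at t)"
    if "a < t" for t
    using that assms by (auto intro!: derivative_eq_intros simp: diff_diff_eq)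
  show "0 \<le> ?C - k * ((k - 1) * t powr (k - 2))" if "a < t" "t < b" for t
  proof -
    have "t powr (k - 2) \<le> b powr (k - 2)"
      using that assms by (intro powr_mono2) auto
    then show ?thesis
      using assms mult_left_mono[of "t powr (k - 2)" "b powr (k - 2)" "k * (k - 1)"] by simp
  qed
qed

lemma convex_on_sum_le_chord:
  fixes f :: "real \<Rightarrow> real" and w y :: "'i \<Rightarrow> real"
  assumes conv: "convex_on {a..b} f" and w: "(\<Sum>i\<in>S. w i) = 1" "\<And>i. i \<in> S \<Longrightarrow> w i \<ge> 0"
    and y: "\<And>i. i \<in> S \<Longrightarrow> y i \<in> {a..b}"
  shows "(\<Sum>i\<in>S. w i * f (y i)) \<le> (f b - f a) / (b - a) * ((\<Sum>i\<in>S. w i * y i) - a) + f a"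
proof -
  define s where "s = (f b - f a) / (b - a)"
  have "(\<Sum>i\<in>S. w i * f (y i)) \<le> (\<Sum>i\<in>S. w i * (s * (y i - a) + f a))"
    using w y convex_onD_Icc'[OF conv] by (auto intro!: sum_mono mult_left_mono simp: s_def)
  also have "\<dots> = (\<Sum>i\<in>S. s * (w i * y i) + (f a - s * a) * w i)"
    by (intro sum.cong) (auto simp: algebra_simps)
  also have "\<dots> = s * (\<Sum>i\<in>S. w i * y i) + (f a - s * a) * (\<Sum>i\<in>S. w i)"
    by (simp add: sum.distrib sum_distrib_left)
  finally show ?thesis
    using w by (simp add: s_def algebra_simps)
qed

lemma chord_gap_le:
  fixes f :: "real \<Rightarrow> real"
  assumes conv: "convex_on {a..b} (\<lambda>t. c / 2 * t\<^sup>2 - f t)" and m: "a \<le> m" "m \<le> b"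
  shows "(f b - f a) / (b - a) * (m - a) + f a - f m \<le> c / 2 * ((m - a) * (b - m))"
proof (cases "a = b")
  case False
  define s where "s = (f b - f a) / (b - a)"
  have "((c / 2 * b\<^sup>2 - f b) - (c / 2 * a\<^sup>2 - f a)) / (b - a) = c / 2 * (a + b) - s"
    using False by (simp add: s_def field_simps power2_eq_square)
  moreover have "c / 2 * m\<^sup>2 - f m
      \<le> ((c / 2 * b\<^sup>2 - f b) - (c / 2 * a\<^sup>2 - f a)) / (b - a) * (m - a) + (c / 2 * a\<^sup>2 - f a)"
    using convex_onD_Icc'[OF conv] m by simp
  ultimately have "c / 2 * m\<^sup>2 - f m \<le> (c / 2 * (a + b) - s) * (m - a) + (c / 2 * a\<^sup>2 - f a)"
    by simp
  moreover have "(c / 2 * (a + b) - s) * (m - a) + (c / 2 * a\<^sup>2 - f a) - (c / 2 * m\<^sup>2 - f m)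
      = c / 2 * ((m - a) * (b - m)) - (s * (m - a) + f a - f m)"
    by (simp add: field_simps power2_eq_square)
  ultimately have "s * (m - a) + f a - f m \<le> c / 2 * ((m - a) * (b - m))"
    by linarith
  then show ?thesis
    by (simp add: s_def)
qed (use m in simp)

lemma jensen_gap_le:
  fixes f :: "real \<Rightarrow> real" and w y :: "'i \<Rightarrow> real"
  assumes conv: "convex_on {a..b} f" and conv': "convex_on {a..b} (\<lambda>t. c / 2 * t\<^sup>2 - f t)"
    and c: "0 \<le> c"
    and w: "(\<Sum>i\<in>S. w i) = 1" "\<And>i. i \<in> S \<Longrightarrow> w i \<ge> 0"
    and y: "\<And>i. i \<in> S \<Longrightarrow> y i \<in> {a..b}"
  shows "(\<Sum>i\<in>S. w i * f (y i)) - f (\<Sum>i\<in>S. w i * y i) \<le> c / 8 * (b - a)\<^sup>2"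
proof -
  define m where "m = (\<Sum>i\<in>S. w i * y i)"
  have "(\<Sum>i\<in>S. w i * a) \<le> m" "m \<le> (\<Sum>i\<in>S. w i * b)"
    unfolding m_def using w y by (auto intro!: sum_mono mult_left_mono)
  then have m: "a \<le> m" "m \<le> b"
    using w by (simp_all flip: sum_distrib_right)
  have "(\<Sum>i\<in>S. w i * f (y i)) - f m \<le> (f b - f a) / (b - a) * (m - a) + f a - f m"
    using convex_on_sum_le_chord[OF conv w y] by (simp add: m_def)
  also have "\<dots> \<le> c / 2 * ((m - a) * (b - m))"
    using chord_gap_le[OF conv' m] .
  also have "\<dots> \<le> c / 2 * ((b - a)\<^sup>2 / 4)"
    using c sum_squares_ge_zero[of "(m - a) - (b - m)" 0]
    by (intro mult_left_mono) (auto simp: algebra_simps power2_eq_square)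
  finally show ?thesis
    by (simp add: m_def)
qed

theorem lemma4p3:
  fixes M :: nat and k :: real and x lam :: "nat \<Rightarrow> real"
  assumes "M \<ge> 2" and "k \<ge> 2"
    and "x 1 \<ge> 0"
    and "\<And>i j. 1 \<le> i \<Longrightarrow> i \<le> j \<Longrightarrow> j \<le> M \<Longrightarrow> x i \<le> x j"
    and "\<And>i. 1 \<le> i \<Longrightarrow> i \<le> M \<Longrightarrow> lam i \<ge> 0"
    and "(\<Sum>i=1..M. lam i) = 1"
  shows "(\<Sum>i=1..M. lam i * x i powr k) - (\<Sum>i=1..M. lam i * x i) powr k
         \<le> 1/8 * k * (k - 1) * x M powr (k - 2) * (x M - x 1)^2"
proof -
  define C where "C = k * (k - 1) * x M powr (k - 2)"
  have "x i \<in> {x 1..x M}" if "i \<in> {1..M}" for i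
    using that assms(4)[of 1 i] assms(4)[of i M] by auto
  moreover have "convex_on {x 1..x M} (\<lambda>t. t powr k)"
    using assms(2,3) by (intro convex_on_powr_Icc) auto
  moreover have "convex_on {x 1..x M} (\<lambda>t. C / 2 * t\<^sup>2 - t powr k)"
    unfolding C_def using assms(3,2) by (rule convex_on_quadratic_minus_powr_Icc)
  moreover have "0 \<le> C"
    using assms(2) by (simp add: C_def)
  ultimately have "(\<Sum>i=1..M. lam i * x i powr k) - (\<Sum>i=1..M. lam i * x i) powr k
      \<le> C / 8 * (x M - x 1)\<^sup>2"
    using assms(5,6) by (intro jensen_gap_le) auto
  then show ?thesis
    by (simp add: C_def)
qed

end
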